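(* Let $X$ be a set, $U\subset 2^X$ a non-empty family closed under $\Delta$ and $\cap$, and $\mu:U\to B_2$ a function. (a) If $\mu$ is a measure, then for every ascending sequence $A_0\subset A_1\subset A_2\subset\cdots$ of sets in $U$ such that $A=\bigcup_n A_n\in U$, the binary sequence $(\mu(A_n))_n$ is convergent and $\mu(A)=\lim_{n\to\infty}\mu(A_n)$. (b) Suppose $\mu$ is additive and has the property: for every ascending sequence $(A_n)$ of sets in $U$ whose union $A$ belongs to $U$, the binary sequence $(\mu(A_n))_n$ is convergent and $\mu(A)=\lim_{n\to\infty}\mu(A_n)$. Then $\mu$ is a measure.
   Context: $B_2=\{0,1\}$ with $\oplus$ addition modulo 2. $\mu$ is additive if $\mu(A\Delta B)=\mu(A)\oplus\mu(B)$ for all $A,B\in U$ (equivalently $\mu(A\cup B)=\mu(A)\oplus\mu(B)$ whenever $A\cap B=\emptyset$). $\mu$ is a measure (countably additive) if for every sequence $(A_n)$ of pairwise disjoint sets of $U$ with $\bigcup_nA_n\in U$, the set $\{n:\mu(A_n)=1\}$ is finite and $\mu(\bigcup_nA_n)$ equals the number of such $n$ modulo 2. A binary sequence $(x_n)$ converges to $x_0\in B_2$ if there is $N$ with $x_n=x_0$ for all $n\ge N$; the limit is then $x_0$. *)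

theory Defs
  imports Main
begin

text \<open>The two-element group B_2 = {0,1} with addition mod 2 is modelled by bool:
  0 = False, 1 = True, and x \<oplus> y is (x \<noteq> y).\<close>

definition symdiff :: "'a set \<Rightarrow> 'a set \<Rightarrow> 'a set" where
  "symdiff A B = (A - B) \<union> (B - A)"

definition b2_additive :: "'a set set \<Rightarrow> ('a set \<Rightarrow> bool) \<Rightarrow> bool" where
  "b2_additive U \<mu> \<longleftrightarrow> (\<forall>A\<in>U. \<forall>B\<in>U. \<mu> (symdiff A B) = (\<mu> A \<noteq> \<mu> B))"

text \<open>Countable additivity: for pairwise disjoint sets in U whose union is in U,
  only finitely many have measure 1, and the measure of the union is their number mod 2.\<close>
definition b2_measure :: "'a set set \<Rightarrow> ('a set \<Rightarrow> bool) \<Rightarrow> bool" where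
  "b2_measure U \<mu> \<longleftrightarrow>
     (\<forall>A :: nat \<Rightarrow> 'a set. (\<forall>n. A n \<in> U) \<and> (\<forall>m n. m \<noteq> n \<longrightarrow> A m \<inter> A n = {}) \<and> (\<Union>n. A n) \<in> U \<longrightarrow>
        finite {n. \<mu> (A n)} \<and> \<mu> (\<Union>n. A n) = odd (card {n. \<mu> (A n)}))"

definition b2_converges_to :: "(nat \<Rightarrow> bool) \<Rightarrow> bool \<Rightarrow> bool" where
  "b2_converges_to x x0 \<longleftrightarrow> (\<exists>N. \<forall>n\<ge>N. x n = x0)"

definition b2_convergent :: "(nat \<Rightarrow> bool) \<Rightarrow> bool" where
  "b2_convergent x \<longleftrightarrow> (\<exists>x0. b2_converges_to x x0)"

definition b2_lim :: "(nat \<Rightarrow> bool) \<Rightarrow> bool" where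
  "b2_lim x = (THE x0. b2_converges_to x x0)"

definition b2_asc_continuous :: "'a set set \<Rightarrow> ('a set \<Rightarrow> bool) \<Rightarrow> bool" where
  "b2_asc_continuous U \<mu> \<longleftrightarrow>
     (\<forall>A :: nat \<Rightarrow> 'a set. (\<forall>n. A n \<in> U) \<and> (\<forall>n. A n \<subseteq> A (Suc n)) \<and> (\<Union>n. A n) \<in> U \<longrightarrow>
        b2_convergent (\<lambda>n. \<mu> (A n)) \<and> \<mu> (\<Union>n. A n) = b2_lim (\<lambda>n. \<mu> (A n)))"

end

theory Submission
  imports Defs "HOL-Library.Disjoint_Sets"
begin

text \<open>Both directions rest on the same observation: a sequence of sets in \<open>U\<close> can be traded
  for its sequence of disjoint pieces (differences of an ascending chain) or of partial unions
  (of a disjoint sequence), and in both cases the measures of the chain are the partial sums in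
  \<open>B\<^sub>2\<close> of the measures of the pieces. A sequence of partial sums in \<open>B\<^sub>2\<close> converges exactly
  when only finitely many terms are \<open>1\<close>, and its limit is then their number mod 2.\<close>

definition b2_partial_sum :: "(nat \<Rightarrow> bool) \<Rightarrow> nat \<Rightarrow> bool" where
  "b2_partial_sum x n = odd (card {k. k \<le> n \<and> x k})"

lemma b2_partial_sum_0 [simp]: "b2_partial_sum x 0 = x 0"
proof -
  have "{k. k \<le> (0::nat) \<and> x k} = (if x 0 then {0} else {})" by auto
  then show ?thesis by (simp add: b2_partial_sum_def)
qed

lemma b2_partial_sum_Suc [simp]:
  "b2_partial_sum x (Suc n) = (b2_partial_sum x n \<noteq> x (Suc n))"
proof -
  have "{k. k \<le> Suc n \<and> x k} = {k. k \<le> n \<and> x k} \<union> (if x (Suc n) then {Suc n} else {})"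
    by (auto simp: le_Suc_eq)
  then show ?thesis by (simp add: b2_partial_sum_def)
qed

lemma b2_converges_to_unique:
  assumes "b2_converges_to x a" and "b2_converges_to x b"
  shows "a = b"
proof -
  obtain M N where "\<forall>n\<ge>M. x n = a" and "\<forall>n\<ge>N. x n = b"
    using assms unfolding b2_converges_to_def by blast
  then show ?thesis by (metis max.cobounded1 max.cobounded2)
qed

lemma b2_lim_eqI:
  assumes "b2_converges_to x a"
  shows "b2_convergent x \<and> b2_lim x = a"
proof -
  have "b2_lim x = a"
    unfolding b2_lim_def
    by (rule the_equality[where P = "b2_converges_to x", OF assms])
      (rule b2_converges_to_unique[OF _ assms])
  then show ?thesis using assms unfolding b2_convergent_def by blast
qed

lemma b2_converges_to_partial_sum_iff:
  "b2_converges_to (b2_partial_sum x) L \<longleftrightarrow> finite {k. x k} \<and> L = odd (card {k. x k})"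
proof
  assume "b2_converges_to (b2_partial_sum x) L"
  then obtain N where N: "\<And>n. n \<ge> N \<Longrightarrow> b2_partial_sum x n = L"
    unfolding b2_converges_to_def by blast
  have bounded: "{k. x k} \<subseteq> {..N}"
  proof (rule subsetI, rule ccontr)
    fix k assume "k \<in> {k. x k}" and "k \<notin> {..N}"
    then obtain m where "x (Suc m)" and "N \<le> m" by (cases k) auto
    moreover have "b2_partial_sum x (Suc m) = b2_partial_sum x m"
      using N[of m] N[of "Suc m"] \<open>N \<le> m\<close> by simp
    ultimately show False by simp
  qed
  then have "{k. k \<le> N \<and> x k} = {k. x k}" by blast
  moreover have "finite {k. x k}" using bounded by (rule finite_subset) simp
  ultimately show "finite {k. x k} \<and> L = odd (card {k. x k})"
    using N[of N] by (simp add: b2_partial_sum_def)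
next
  assume "finite {k. x k} \<and> L = odd (card {k. x k})"
  then obtain N where "\<forall>k\<in>{k. x k}. k \<le> N" and L: "L = odd (card {k. x k})"
    using finite_nat_set_iff_bounded_le by blast
  have "b2_partial_sum x n = L" if "n \<ge> N" for n
  proof -
    have "{k. k \<le> n \<and> x k} = {k. x k}" using \<open>\<forall>k\<in>{k. x k}. k \<le> N\<close> that by auto
    then show ?thesis by (simp add: b2_partial_sum_def L)
  qed
  then show "b2_converges_to (b2_partial_sum x) L"
    unfolding b2_converges_to_def by blast
qed

lemma symdiff_self [simp]: "symdiff A A = {}"
  by (simp add: symdiff_def)

lemma symdiff_disjoint: "A \<inter> B = {} \<Longrightarrow> symdiff A B = A \<union> B"
  by (auto simp: symdiff_def)

lemma symdiff_subset: "B \<subseteq> A \<Longrightarrow> symdiff A B = A - B"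
  by (auto simp: symdiff_def)

lemma b2_measureD:
  fixes A :: "nat \<Rightarrow> 'a set"
  assumes "b2_measure U \<mu>"
    and "\<And>n. A n \<in> U" and "disjoint_family A" and "(\<Union>n. A n) \<in> U"
  shows "finite {n. \<mu> (A n)} \<and> \<mu> (\<Union>n. A n) = odd (card {n. \<mu> (A n)})"
  using assms unfolding b2_measure_def disjoint_family_on_def by blast

lemma b2_asc_continuousD:
  fixes A :: "nat \<Rightarrow> 'a set"
  assumes "b2_asc_continuous U \<mu>"
    and "\<And>n. A n \<in> U" and "mono A" and "(\<Union>n. A n) \<in> U"
  shows "b2_convergent (\<lambda>n. \<mu> (A n)) \<and> \<mu> (\<Union>n. A n) = b2_lim (\<lambda>n. \<mu> (A n))"
  using assms unfolding b2_asc_continuous_def mono_iff_le_Suc by blast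

lemma b2_measure_empty:
  assumes "b2_measure U \<mu>" and "{} \<in> U"
  shows "\<not> \<mu> {}"
  using b2_measureD[OF assms(1), of "\<lambda>_. {}"] assms(2)
  by (cases "\<mu> {}") (simp_all add: disjoint_family_on_def infinite_UNIV_nat)

lemma b2_measure_finite_union:
  assumes "b2_measure U \<mu>" and "{} \<in> U"
    and "\<And>k. A k \<in> U" and "disjoint_family A" and "(\<Union>k\<le>n. A k) \<in> U"
  shows "\<mu> (\<Union>k\<le>n. A k) = b2_partial_sum (\<lambda>k. \<mu> (A k)) n"
proof -
  define E where "E k = (if k \<le> n then A k else {})" for k
  have "(\<Union>k. E k) = (\<Union>k\<le>n. A k)" by (auto simp: E_def split: if_splits)
  moreover have "{k. \<mu> (E k)} = {k. k \<le> n \<and> \<mu> (A k)}"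
    using b2_measure_empty[OF assms(1,2)] by (auto simp: E_def)
  moreover have "E k \<in> U" for k
    using assms(2,3) by (simp add: E_def)
  moreover have "disjoint_family E"
    using assms(4) by (simp add: E_def disjoint_family_on_def)
  ultimately show ?thesis
    using b2_measureD[OF assms(1), of E] assms(5) by (simp add: b2_partial_sum_def)
qed

lemma UN_atMost_Suc_eq_symdiff:
  assumes "disjoint_family A"
  shows "(\<Union>k\<le>Suc n. A k) = symdiff (\<Union>k\<le>n. A k) (A (Suc n))"
proof -
  have "A k \<inter> A (Suc n) = {}" if "k \<le> n" for k
    using assms that by (simp add: disjoint_family_onD)
  then have "(\<Union>k\<le>n. A k) \<inter> A (Suc n) = {}" by blast
  then show ?thesis by (simp add: atMost_Suc symdiff_disjoint Un_commute)
qed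

lemma disjoint_UN_atMost_in:
  fixes A :: "nat \<Rightarrow> 'a set"
  assumes "\<And>A B. A \<in> U \<Longrightarrow> B \<in> U \<Longrightarrow> symdiff A B \<in> U"
    and "\<And>k. A k \<in> U" and "disjoint_family A"
  shows "(\<Union>k\<le>n. A k) \<in> U"
proof (induction n)
  case (Suc n)
  then show ?case by (simp add: assms(1,2) UN_atMost_Suc_eq_symdiff[OF assms(3)])
qed (simp add: assms(2))

lemma b2_additive_finite_union:
  assumes "\<And>A B. A \<in> U \<Longrightarrow> B \<in> U \<Longrightarrow> symdiff A B \<in> U" and "b2_additive U \<mu>"
    and "\<And>k. A k \<in> U" and "disjoint_family A"
  shows "\<mu> (\<Union>k\<le>n. A k) = b2_partial_sum (\<lambda>k. \<mu> (A k)) n"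
proof (induction n)
  case (Suc n)
  have "(\<Union>k\<le>n. A k) \<in> U" using assms(1,3,4) by (rule disjoint_UN_atMost_in)
  then have "\<mu> (symdiff (\<Union>k\<le>n. A k) (A (Suc n))) = (\<mu> (\<Union>k\<le>n. A k) \<noteq> \<mu> (A (Suc n)))"
    using assms(2,3) unfolding b2_additive_def by blast
  then show ?case using Suc by (simp add: UN_atMost_Suc_eq_symdiff[OF assms(4)])
qed simp

lemma b2_measure_imp_asc_continuous:
  assumes symdiff_closed: "\<And>A B. A \<in> U \<Longrightarrow> B \<in> U \<Longrightarrow> symdiff A B \<in> U"
    and "{} \<in> U" and "b2_measure U \<mu>"
  shows "b2_asc_continuous U \<mu>"
  unfolding b2_asc_continuous_def
proof (intro allI impI)
  fix A :: "nat \<Rightarrow> 'a set"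
  assume "(\<forall>n. A n \<in> U) \<and> (\<forall>n. A n \<subseteq> A (Suc n)) \<and> (\<Union>n. A n) \<in> U"
  then have A: "\<And>n. A n \<in> U" and "mono A" and UA: "(\<Union>n. A n) \<in> U"
    unfolding mono_iff_le_Suc by simp_all
  define D where "D = disjointed A"
  have D: "D n \<in> U" for n
  proof (cases n)
    case (Suc m)
    have "A m \<subseteq> A (Suc m)" using \<open>mono A\<close> by (simp add: mono_iff_le_Suc)
    then have "D n = symdiff (A (Suc m)) (A m)"
      using \<open>mono A\<close> Suc by (simp add: D_def disjointed_mono symdiff_subset)
    then show ?thesis using symdiff_closed[OF A A] by simp
  qed (simp add: D_def A)
  have "disjoint_family D" by (simp add: D_def disjoint_family_disjointed)
  have "(\<Union>k\<le>n. D k) = A n" for n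
    using finite_UN_disjointed_eq[of A "Suc n"] mono_imp_UN_eq_last[OF \<open>mono A\<close>]
    by (simp add: D_def atLeast0LessThan lessThan_Suc_atMost)
  then have partial_sums: "(\<lambda>n. \<mu> (A n)) = b2_partial_sum (\<lambda>k. \<mu> (D k))"
    using b2_measure_finite_union[OF assms(3,2) D \<open>disjoint_family D\<close>] A by (simp add: fun_eq_iff)
  have "(\<Union>n. D n) = (\<Union>n. A n)" by (simp add: D_def UN_disjointed_eq)
  then have "finite {k. \<mu> (D k)} \<and> \<mu> (\<Union>n. A n) = odd (card {k. \<mu> (D k)})"
    using b2_measureD[OF assms(3) D \<open>disjoint_family D\<close>] UA by simp
  then have "b2_converges_to (\<lambda>n. \<mu> (A n)) (\<mu> (\<Union>n. A n))"
    unfolding partial_sums by (simp add: b2_converges_to_partial_sum_iff)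
  then show "b2_convergent (\<lambda>n. \<mu> (A n)) \<and> \<mu> (\<Union>n. A n) = b2_lim (\<lambda>n. \<mu> (A n))"
    by (simp add: b2_lim_eqI)
qed

lemma b2_additive_asc_continuous_imp_measure:
  assumes symdiff_closed: "\<And>A B. A \<in> U \<Longrightarrow> B \<in> U \<Longrightarrow> symdiff A B \<in> U"
    and "b2_additive U \<mu>" and "b2_asc_continuous U \<mu>"
  shows "b2_measure U \<mu>"
  unfolding b2_measure_def
proof (intro allI impI)
  fix A :: "nat \<Rightarrow> 'a set"
  assume "(\<forall>n. A n \<in> U) \<and> (\<forall>m n. m \<noteq> n \<longrightarrow> A m \<inter> A n = {}) \<and> (\<Union>n. A n) \<in> U"
  then have A: "\<And>n. A n \<in> U" and "disjoint_family A" and UA: "(\<Union>n. A n) \<in> U"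
    by (auto simp: disjoint_family_on_def)
  define S where "S n = (\<Union>k\<le>n. A k)" for n
  have S: "S n \<in> U" for n
    unfolding S_def using symdiff_closed A \<open>disjoint_family A\<close> by (rule disjoint_UN_atMost_in)
  have "mono S" unfolding S_def by (intro monoI UN_mono) auto
  have "(\<Union>n. S n) = (\<Union>n. A n)" by (auto simp: S_def)
  then have "b2_convergent (\<lambda>n. \<mu> (S n)) \<and> \<mu> (\<Union>n. A n) = b2_lim (\<lambda>n. \<mu> (S n))"
    using b2_asc_continuousD[OF assms(3) S \<open>mono S\<close>] UA by simp
  then obtain L where L: "b2_converges_to (\<lambda>n. \<mu> (S n)) L" and "\<mu> (\<Union>n. A n) = L"
    unfolding b2_convergent_def using b2_lim_eqI by blast
  moreover have "(\<lambda>n. \<mu> (S n)) = b2_partial_sum (\<lambda>k. \<mu> (A k))"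
    using b2_additive_finite_union[OF symdiff_closed assms(2) A \<open>disjoint_family A\<close>]
    by (simp add: S_def fun_eq_iff)
  ultimately show "finite {n. \<mu> (A n)} \<and> \<mu> (\<Union>n. A n) = odd (card {n. \<mu> (A n)})"
    by (simp add: b2_converges_to_partial_sum_iff)
qed

theorem theorem4p2:
  fixes X :: "'a set" and U :: "'a set set" and \<mu> :: "'a set \<Rightarrow> bool"
  assumes "U \<subseteq> Pow X" and "U \<noteq> {}"
    and "\<And>A B. A \<in> U \<Longrightarrow> B \<in> U \<Longrightarrow> symdiff A B \<in> U"
    and "\<And>A B. A \<in> U \<Longrightarrow> B \<in> U \<Longrightarrow> A \<inter> B \<in> U"
  shows "(b2_measure U \<mu> \<longrightarrow> b2_asc_continuous U \<mu>)
       \<and> (b2_additive U \<mu> \<and> b2_asc_continuous U \<mu> \<longrightarrow> b2_measure U \<mu>)"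
proof -
  obtain B where "B \<in> U" using assms(2) by blast
  then have "{} \<in> U" using assms(3)[of B B] by simp
  then show ?thesis
    using b2_measure_imp_asc_continuous b2_additive_asc_continuous_imp_measure assms(3) by blast
qed

end
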